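(* Let $\mathbb{k}$ be a commutative ring, $M$ a $\mathbb{k}$-module with a descending filtration by $\mathbb{k}$-submodules $M=M_0\supseteq M_1\supseteq M_2\supseteq\cdots$, $G^{(1)}\subseteq GL^{(1)}_{\mathbb{k}}(M)$ a subgroup and $T\subseteq \mathrm{End}^{(1)}_{\mathbb{k}}(M)$ a $\mathbb{k}$-submodule. Let $i\ge 1$ and suppose that the pair $(T^{(i)},G^{(i)})$ is of pointwise Lie type, i.e.: (a) for every $\xi\in T^{(i)}$ and every $z\in M$ there exists $g\in G^{(i)}$ such that, if $\mathrm{ord}(\xi(z))<\infty$, then $\mathrm{ord}((g-\mathrm{Id}-\xi)(z))>\mathrm{ord}(\xi(z))$; (b) for every $g\in G^{(i)}$ and every $z\in M$ there exists $\xi\in T^{(i)}$ such that, if $\mathrm{ord}((g-\mathrm{Id})(z))<\infty$, then $\mathrm{ord}((g-\mathrm{Id}-\xi)(z))>\mathrm{ord}((g-\mathrm{Id})(z))$. Then for every $z\in M$ and every integer $N\ge0$: $$\overline{T^{(i)}(z)}\supseteq M_{N+1}\quad\Longleftrightarrow\quad \overline{G^{(i)}z}\supseteq \{z\}+M_{N+1}.$$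
   Context: For $z\in M$, $\mathrm{ord}(z)=\sup\{j: z\in M_j\}$ (equal to $\infty$ if $z\in\bigcap_j M_j$). For $i\ge0$, $\mathrm{End}^{(i)}_{\mathbb{k}}(M)=\{\phi\in \mathrm{End}_{\mathbb{k}}(M): \phi(M_j)\subseteq M_{j+i}\ \forall j\ge0\}$. $GL^{(0)}_{\mathbb{k}}(M)$ is the group of $\mathbb{k}$-linear automorphisms $g$ of $M$ with $g(M_j)\subseteq M_j$ and $g^{-1}(M_j)\subseteq M_j$ for all $j$; for $i\ge1$, $GL^{(i)}_{\mathbb{k}}(M)=\{g\in GL^{(0)}_{\mathbb{k}}(M): g-\mathrm{Id},\ g^{-1}-\mathrm{Id}\in \mathrm{End}^{(i)}_{\mathbb{k}}(M)\}$. For $i\ge1$ put $G^{(i)}=G^{(1)}\cap GL^{(i)}_{\mathbb{k}}(M)$ and $T^{(i)}=T\cap \mathrm{End}^{(i)}_{\mathbb{k}}(M)$. For $z\in M$, $T^{(i)}(z)=\{\xi(z):\xi\in T^{(i)}\}$ and $G^{(i)}z=\{g(z):g\in G^{(i)}\}$. For a subset $X\subseteq M$, its closure in the filtration topology is $\overline{X}=\bigcap_{j\ge1}(X+M_j)$. *)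

theory Defs
  imports Main "HOL-Library.Extended_Nat"
begin

definition filtration :: "('k::comm_ring_1 \<Rightarrow> 'm::ab_group_add \<Rightarrow> 'm) \<Rightarrow> (nat \<Rightarrow> 'm set) \<Rightarrow> bool" where
  "filtration sc Mf \<longleftrightarrow> (\<forall>j. module.subspace sc (Mf j)) \<and> Mf 0 = UNIV \<and> (\<forall>j. Mf (Suc j) \<subseteq> Mf j)"

definition ord :: "(nat \<Rightarrow> 'm set) \<Rightarrow> 'm \<Rightarrow> enat" where
  "ord Mf z = Sup (enat ` {j. z \<in> Mf j})"

definition End_k :: "('k::comm_ring_1 \<Rightarrow> 'm::ab_group_add \<Rightarrow> 'm) \<Rightarrow> ('m \<Rightarrow> 'm) set" where
  "End_k sc = {f. module_hom sc sc f}"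

definition End_i :: "('k::comm_ring_1 \<Rightarrow> 'm::ab_group_add \<Rightarrow> 'm) \<Rightarrow> (nat \<Rightarrow> 'm set) \<Rightarrow> nat \<Rightarrow> ('m \<Rightarrow> 'm) set" where
  "End_i sc Mf i = {\<phi> \<in> End_k sc. \<forall>j. \<phi> ` Mf j \<subseteq> Mf (j + i)}"

definition GL0 :: "('k::comm_ring_1 \<Rightarrow> 'm::ab_group_add \<Rightarrow> 'm) \<Rightarrow> (nat \<Rightarrow> 'm set) \<Rightarrow> ('m \<Rightarrow> 'm) set" where
  "GL0 sc Mf = {g. bij g \<and> module_hom sc sc g \<and> (\<forall>j. g ` Mf j \<subseteq> Mf j \<and> inv g ` Mf j \<subseteq> Mf j)}"

text \<open>Only meaningful (and only used) for i >= 1.\<close>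
definition GL_i :: "('k::comm_ring_1 \<Rightarrow> 'm::ab_group_add \<Rightarrow> 'm) \<Rightarrow> (nat \<Rightarrow> 'm set) \<Rightarrow> nat \<Rightarrow> ('m \<Rightarrow> 'm) set" where
  "GL_i sc Mf i = {g \<in> GL0 sc Mf. (\<lambda>x. g x - x) \<in> End_i sc Mf i \<and> (\<lambda>x. inv g x - x) \<in> End_i sc Mf i}"

definition is_subgroup_fun :: "('m \<Rightarrow> 'm) set \<Rightarrow> ('m \<Rightarrow> 'm) set \<Rightarrow> bool" where
  "is_subgroup_fun H K \<longleftrightarrow> H \<subseteq> K \<and> id \<in> H \<and> (\<forall>g\<in>H. \<forall>h\<in>H. g \<circ> h \<in> H) \<and> (\<forall>g\<in>H. inv g \<in> H)"

definition is_submodule_End :: "('k::comm_ring_1 \<Rightarrow> 'm::ab_group_add \<Rightarrow> 'm) \<Rightarrow> ('m \<Rightarrow> 'm) set \<Rightarrow> ('m \<Rightarrow> 'm) set \<Rightarrow> bool" where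
  "is_submodule_End sc T K \<longleftrightarrow> T \<subseteq> K \<and> (\<lambda>x. 0) \<in> T \<and> (\<forall>\<phi>\<in>T. \<forall>\<psi>\<in>T. (\<lambda>x. \<phi> x + \<psi> x) \<in> T)
     \<and> (\<forall>c. \<forall>\<phi>\<in>T. (\<lambda>x. sc c (\<phi> x)) \<in> T)"

definition fclosure :: "(nat \<Rightarrow> 'm::ab_group_add set) \<Rightarrow> 'm set \<Rightarrow> 'm set" where
  "fclosure Mf X = (\<Inter>j\<in>{1..}. {y + m | y m. y \<in> X \<and> m \<in> Mf j})"

end

theory Submission
  imports Defs
begin

text \<open>Both inclusions are proved by successive approximation along the filtration. An error
  in level k is approximated modulo level k+1 by a value of the other side, and condition (a)
  or (b) converts that value into an element of the other side with the same effect on z modulo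
  level k+1. On the side of T^(i) the corrections are added. On the side of G^(i) they are
  composed: if g has error r and h corrects r up to e, then g(h z) = g z + g r + g e, and since
  every element of G^(i) moves M_j only by elements of M_(j+1), the new error is again one
  level deeper.\<close>

locale filtered_module = module sc
  for sc :: "'k::comm_ring_1 \<Rightarrow> 'm::ab_group_add \<Rightarrow> 'm" +
  fixes Mf :: "nat \<Rightarrow> 'm set"
  assumes filtration: "filtration sc Mf"
begin

sublocale module_pair sc sc ..

lemma subspace_Mf: "subspace (Mf j)"
  using filtration unfolding filtration_def by blast

lemma Mf_Suc_subset: "Mf (Suc j) \<subseteq> Mf j"
  using filtration unfolding filtration_def by blast

lemma Mf_antimono: "j \<le> k \<Longrightarrow> Mf k \<subseteq> Mf j"
  using Mf_Suc_subset by (rule lift_Suc_antimono_le)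

lemma zero_mem_Mf: "0 \<in> Mf j"
  by (rule subspace_0[OF subspace_Mf])

lemma add_mem_Mf: "x \<in> Mf j \<Longrightarrow> y \<in> Mf j \<Longrightarrow> x + y \<in> Mf j"
  by (rule subspace_add[OF subspace_Mf])

lemma diff_mem_Mf: "x \<in> Mf j \<Longrightarrow> y \<in> Mf j \<Longrightarrow> x - y \<in> Mf j"
  by (rule subspace_diff[OF subspace_Mf])

lemma neg_mem_Mf: "x \<in> Mf j \<Longrightarrow> - x \<in> Mf j"
  by (rule subspace_neg[OF subspace_Mf])

lemma displacement_mem_imp_mem: "x \<in> Mf j \<Longrightarrow> f x - x \<in> Mf (j + i) \<Longrightarrow> f x \<in> Mf j"
  using add_mem_Mf Mf_antimono[of j "j + i"] by (metis diff_add_cancel le_add1 subsetD)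

lemma displacement_mem_comp:
  assumes "\<And>x j. x \<in> Mf j \<Longrightarrow> f x - x \<in> Mf (j + i)"
    and "\<And>x j. x \<in> Mf j \<Longrightarrow> f' x - x \<in> Mf (j + i)"
    and "x \<in> Mf j"
  shows "f (f' x) - x \<in> Mf (j + i)"
proof -
  have "f' x \<in> Mf j"
    using assms(3) assms(2)[OF assms(3)] by (rule displacement_mem_imp_mem)
  then have "(f (f' x) - f' x) + (f' x - x) \<in> Mf (j + i)"
    using assms by (blast intro: add_mem_Mf)
  then show ?thesis
    by simp
qed

lemma GL_i_iff:
  "g \<in> GL_i sc Mf i \<longleftrightarrow> bij g \<and> module_hom sc sc g \<and>
     (\<forall>j. \<forall>x\<in>Mf j. g x - x \<in> Mf (j + i) \<and> inv g x - x \<in> Mf (j + i))"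
proof
  assume "g \<in> GL_i sc Mf i"
  then show "bij g \<and> module_hom sc sc g \<and>
     (\<forall>j. \<forall>x\<in>Mf j. g x - x \<in> Mf (j + i) \<and> inv g x - x \<in> Mf (j + i))"
    unfolding GL_i_def GL0_def End_i_def by blast
next
  assume g: "bij g \<and> module_hom sc sc g \<and>
     (\<forall>j. \<forall>x\<in>Mf j. g x - x \<in> Mf (j + i) \<and> inv g x - x \<in> Mf (j + i))"
  then have hom_inv: "module_hom sc sc (inv g)"
    by (blast intro: bij_module_hom_imp_inv_module_hom)
  have "module_hom sc sc (\<lambda>x. g x - x)" "module_hom sc sc (\<lambda>x. inv g x - x)"
    using g hom_inv by (auto intro!: module_hom_sub module_hom_ident)
  moreover have "g ` Mf j \<subseteq> Mf j" "inv g ` Mf j \<subseteq> Mf j" for j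
    using g by (blast intro: displacement_mem_imp_mem)+
  ultimately show "g \<in> GL_i sc Mf i"
    using g unfolding GL_i_def GL0_def End_i_def End_k_def by blast
qed

lemma id_mem_GL_i: "id \<in> GL_i sc Mf i"
  unfolding GL_i_iff by (simp add: module_hom_id inv_id zero_mem_Mf)

lemma comp_mem_GL_i:
  assumes "g \<in> GL_i sc Mf i" "h \<in> GL_i sc Mf i"
  shows "g \<circ> h \<in> GL_i sc Mf i"
proof -
  have "bij g" "bij h" "module_hom sc sc g" "module_hom sc sc h"
    using assms unfolding GL_i_iff by blast+
  moreover have "inv (g \<circ> h) = inv h \<circ> inv g"
    using \<open>bij g\<close> \<open>bij h\<close> by (rule o_inv_distrib)
  moreover have "(g \<circ> h) x - x \<in> Mf (j + i)" "(inv h \<circ> inv g) x - x \<in> Mf (j + i)"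
    if "x \<in> Mf j" for x j
    using assms that unfolding GL_i_iff comp_def by (blast intro: displacement_mem_comp)+
  ultimately show ?thesis
    unfolding GL_i_iff by (simp add: bij_comp module_hom_compose)
qed

lemma GL_i_add: "g \<in> GL_i sc Mf i \<Longrightarrow> g (a + b) = g a + g b"
  unfolding GL_i_iff by (blast intro: module_hom.add)

lemma GL_i_displacement_mem: "g \<in> GL_i sc Mf i \<Longrightarrow> x \<in> Mf j \<Longrightarrow> g x - x \<in> Mf (j + i)"
  unfolding GL_i_iff by blast

lemma zero_mem_End_i: "(\<lambda>x. 0) \<in> End_i sc Mf i"
  unfolding End_i_def End_k_def by (auto simp: module_hom_iff module_axioms zero_mem_Mf)

lemma add_mem_End_i:
  "\<phi> \<in> End_i sc Mf i \<Longrightarrow> \<psi> \<in> End_i sc Mf i \<Longrightarrow> (\<lambda>x. \<phi> x + \<psi> x) \<in> End_i sc Mf i"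
  unfolding End_i_def End_k_def by (blast intro: module_hom_add add_mem_Mf)

lemma mem_Suc_if_enat_less_ord:
  assumes "enat k < ord Mf x"
  shows "x \<in> Mf (Suc k)"
proof (rule ccontr)
  assume "x \<notin> Mf (Suc k)"
  then have "j \<le> k" if "x \<in> Mf j" for j
    using that Mf_antimono[of "Suc k" j] by (meson not_less_eq_eq subsetD)
  then have "ord Mf x \<le> enat k"
    unfolding ord_def by (auto intro: Sup_least)
  with assms show False
    by simp
qed

lemma mem_Suc_if_ord_increases:
  assumes "u \<in> Mf k" and "ord Mf u < \<infinity> \<longrightarrow> ord Mf u < ord Mf v"
  shows "u \<in> Mf (Suc k) \<or> v \<in> Mf (Suc k)"
proof (cases "ord Mf u < \<infinity>")
  case True
  have "enat k \<le> ord Mf u"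
    using assms(1) unfolding ord_def by (simp add: Sup_upper)
  with True assms(2) show ?thesis
    by (metis mem_Suc_if_enat_less_ord order_le_less_trans)
next
  case False
  then show ?thesis
    by (simp add: mem_Suc_if_enat_less_ord)
qed

lemma mem_fclosure_iff: "x \<in> fclosure Mf X \<longleftrightarrow> (\<forall>j. \<exists>y\<in>X. x - y \<in> Mf j)"
proof
  assume x: "x \<in> fclosure Mf X"
  show "\<forall>j. \<exists>y\<in>X. x - y \<in> Mf j"
  proof
    fix j
    have "x \<in> {y + m | y m. y \<in> X \<and> m \<in> Mf (Suc j)}"
      using x unfolding fclosure_def by simp
    then obtain y m where "y \<in> X" "m \<in> Mf (Suc j)" "x = y + m"
      by blast
    then show "\<exists>y\<in>X. x - y \<in> Mf j"
      using Mf_Suc_subset by (intro bexI[of _ y]) auto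
  qed
next
  assume approx: "\<forall>j. \<exists>y\<in>X. x - y \<in> Mf j"
  have "x \<in> {y + m | y m. y \<in> X \<and> m \<in> Mf j}" for j
  proof -
    from approx obtain y where "y \<in> X" "x - y \<in> Mf j"
      by blast
    moreover have "x = y + (x - y)"
      by simp
    ultimately show ?thesis
      by blast
  qed
  then show "x \<in> fclosure Mf X"
    unfolding fclosure_def by blast
qed

lemma mem_fclosureI:
  assumes "\<And>j. n \<le> j \<Longrightarrow> \<exists>y\<in>X. x - y \<in> Mf j"
  shows "x \<in> fclosure Mf X"
  unfolding mem_fclosure_iff
proof
  fix j
  obtain y where "y \<in> X" "x - y \<in> Mf (max n j)"
    using assms[of "max n j"] by auto
  then show "\<exists>y\<in>X. x - y \<in> Mf j"
    using Mf_antimono[of j "max n j"] by (intro bexI[of _ y]) auto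
qed

lemma subset_fclosure_of_additive_approx:
  assumes zero: "0 \<in> X" and add: "\<And>x y. x \<in> X \<Longrightarrow> y \<in> X \<Longrightarrow> x + y \<in> X"
    and approx: "\<And>k s. n \<le> k \<Longrightarrow> s \<in> Mf k \<Longrightarrow> \<exists>x\<in>X. s - x \<in> Mf (Suc k)"
  shows "Mf n \<subseteq> fclosure Mf X"
proof
  fix s assume s: "s \<in> Mf n"
  show "s \<in> fclosure Mf X"
  proof (rule mem_fclosureI)
    show "\<exists>x\<in>X. s - x \<in> Mf j" if "n \<le> j" for j
      using that
    proof (induction j rule: dec_induct)
      case base
      show ?case
        using zero s by force
    next
      case (step k)
      then obtain x where "x \<in> X" "s - x \<in> Mf k"
        by blast
      moreover obtain x' where "x' \<in> X" "s - x - x' \<in> Mf (Suc k)"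
        using approx[OF step.hyps(1) \<open>s - x \<in> Mf k\<close>] by blast
      ultimately show ?case
        using add by (metis diff_diff_eq)
    qed
  qed
qed

lemma coset_subset_fclosure_orbit_of_approx:
  assumes id: "id \<in> H" and comp: "\<And>g h. g \<in> H \<Longrightarrow> h \<in> H \<Longrightarrow> g \<circ> h \<in> H"
    and additive: "\<And>g a b. g \<in> H \<Longrightarrow> g (a + b) = g a + g b"
    and displacement: "\<And>g x j. g \<in> H \<Longrightarrow> x \<in> Mf j \<Longrightarrow> g x - x \<in> Mf (Suc j)"
    and approx: "\<And>k r. n \<le> k \<Longrightarrow> r \<in> Mf k \<Longrightarrow> \<exists>h\<in>H. h z - z - r \<in> Mf (Suc k)"
  shows "{z + m | m. m \<in> Mf n} \<subseteq> fclosure Mf {g z | g. g \<in> H}"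
proof clarify
  fix m assume m: "m \<in> Mf n"
  show "z + m \<in> fclosure Mf {g z | g. g \<in> H}"
  proof (rule mem_fclosureI)
    show "\<exists>y\<in>{g z | g. g \<in> H}. z + m - y \<in> Mf j" if "n \<le> j" for j
      using that
    proof (induction j rule: dec_induct)
      case base
      show ?case
        using id m by force
    next
      case (step k)
      then obtain g where g: "g \<in> H" and "z + m - g z \<in> Mf k"
        by blast
      define r where "r = z + m - g z"
      have r: "r \<in> Mf k"
        unfolding r_def by fact
      then obtain h where h: "h \<in> H" and "h z - z - r \<in> Mf (Suc k)"
        using approx[OF step.hyps(1)] by blast
      define e where "e = h z - z - r"
      have e: "e \<in> Mf (Suc k)"
        unfolding e_def by fact
      have "h z = z + (r + e)"
        unfolding e_def by simp
      then have "g (h z) = g z + g r + g e"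
        using additive[OF g] by (simp add: add.assoc)
      then have "z + m - (g \<circ> h) z = - ((g r - r) + g e)"
        unfolding r_def by (simp add: algebra_simps)
      moreover have "g r - r \<in> Mf (Suc k)"
        using displacement[OF g r] .
      moreover have "g e \<in> Mf (Suc k)"
        using displacement_mem_imp_mem[of e "Suc k" g 1] displacement[OF g e] e by simp
      ultimately have "z + m - (g \<circ> h) z \<in> Mf (Suc k)"
        by (metis add_mem_Mf neg_mem_Mf)
      then show ?case
        using comp[OF g h] by blast
    qed
  qed
qed

lemma orbit_approx_of_lie_a:
  assumes "id \<in> H"
    and lie_a: "\<And>\<xi>. \<xi> \<in> S \<Longrightarrow>
      \<exists>g\<in>H. ord Mf (\<xi> z) < \<infinity> \<longrightarrow> ord Mf (\<xi> z) < ord Mf (g z - z - \<xi> z)"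
    and r: "r \<in> fclosure Mf {\<xi> z | \<xi>. \<xi> \<in> S}" "r \<in> Mf k"
  shows "\<exists>h\<in>H. h z - z - r \<in> Mf (Suc k)"
proof -
  obtain \<xi> where "\<xi> \<in> S" and d: "r - \<xi> z \<in> Mf (Suc k)"
    using r(1) unfolding mem_fclosure_iff by blast
  have "r - (r - \<xi> z) \<in> Mf k"
    using r(2) subsetD[OF Mf_Suc_subset d] by (rule diff_mem_Mf)
  then have "\<xi> z \<in> Mf k"
    by simp
  obtain g where "g \<in> H" "ord Mf (\<xi> z) < \<infinity> \<longrightarrow> ord Mf (\<xi> z) < ord Mf (g z - z - \<xi> z)"
    using lie_a[OF \<open>\<xi> \<in> S\<close>] by blast
  from mem_Suc_if_ord_increases[OF \<open>\<xi> z \<in> Mf k\<close> this(2)]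
  consider "\<xi> z \<in> Mf (Suc k)" | "g z - z - \<xi> z \<in> Mf (Suc k)"
    by blast
  then show ?thesis
  proof cases
    case 1
    have "id z - z - r = - ((r - \<xi> z) + \<xi> z)"
      by simp
    also have "\<dots> \<in> Mf (Suc k)"
      using d 1 by (intro neg_mem_Mf add_mem_Mf)
    finally show ?thesis
      using \<open>id \<in> H\<close> by blast
  next
    case 2
    have "g z - z - r = (g z - z - \<xi> z) - (r - \<xi> z)"
      by (simp add: algebra_simps)
    also have "\<dots> \<in> Mf (Suc k)"
      using 2 d by (rule diff_mem_Mf)
    finally show ?thesis
      using \<open>g \<in> H\<close> by blast
  qed
qed

lemma value_approx_of_lie_b:
  assumes "(\<lambda>x. 0) \<in> S"
    and lie_b: "\<And>g. g \<in> H \<Longrightarrow>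
      \<exists>\<xi>\<in>S. ord Mf (g z - z) < \<infinity> \<longrightarrow> ord Mf (g z - z) < ord Mf (g z - z - \<xi> z)"
    and s: "z + s \<in> fclosure Mf {g z | g. g \<in> H}" "s \<in> Mf k"
  shows "\<exists>\<xi>\<in>S. s - \<xi> z \<in> Mf (Suc k)"
proof -
  obtain g where "g \<in> H" and d: "z + s - g z \<in> Mf (Suc k)"
    using s(1) unfolding mem_fclosure_iff by blast
  have "s - (z + s - g z) \<in> Mf k"
    using s(2) subsetD[OF Mf_Suc_subset d] by (rule diff_mem_Mf)
  then have "g z - z \<in> Mf k"
    by (simp add: algebra_simps)
  obtain \<xi> where "\<xi> \<in> S" "ord Mf (g z - z) < \<infinity> \<longrightarrow> ord Mf (g z - z) < ord Mf (g z - z - \<xi> z)"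
    using lie_b[OF \<open>g \<in> H\<close>] by blast
  from mem_Suc_if_ord_increases[OF \<open>g z - z \<in> Mf k\<close> this(2)]
  consider "g z - z \<in> Mf (Suc k)" | "g z - z - \<xi> z \<in> Mf (Suc k)"
    by blast
  then show ?thesis
  proof cases
    case 1
    have "s - 0 = (g z - z) + (z + s - g z)"
      by (simp add: algebra_simps)
    also have "\<dots> \<in> Mf (Suc k)"
      using 1 d by (rule add_mem_Mf)
    finally show ?thesis
      using assms(1) by force
  next
    case 2
    have "s - \<xi> z = (g z - z - \<xi> z) + (z + s - g z)"
      by (simp add: algebra_simps)
    also have "\<dots> \<in> Mf (Suc k)"
      using 2 d by (rule add_mem_Mf)
    finally show ?thesis
      using \<open>\<xi> \<in> S\<close> by blast
  qed
qed

lemma coset_subset_fclosure_orbit: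
  assumes "id \<in> H" "\<And>g h. g \<in> H \<Longrightarrow> h \<in> H \<Longrightarrow> g \<circ> h \<in> H" "H \<subseteq> GL_i sc Mf i" "1 \<le> i"
    and lie_a: "\<And>\<xi>. \<xi> \<in> S \<Longrightarrow>
      \<exists>g\<in>H. ord Mf (\<xi> z) < \<infinity> \<longrightarrow> ord Mf (\<xi> z) < ord Mf (g z - z - \<xi> z)"
    and dense: "Mf n \<subseteq> fclosure Mf {\<xi> z | \<xi>. \<xi> \<in> S}"
  shows "{z + m | m. m \<in> Mf n} \<subseteq> fclosure Mf {g z | g. g \<in> H}"
proof (rule coset_subset_fclosure_orbit_of_approx)
  show "g (a + b) = g a + g b" if "g \<in> H" for g a b
    using that assms(3) GL_i_add by blast
  show "g x - x \<in> Mf (Suc j)" if "g \<in> H" "x \<in> Mf j" for g x j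
    using that assms(3,4) GL_i_displacement_mem[of g i x j] Mf_antimono[of "Suc j" "j + i"] by auto
  fix k r
  assume "n \<le> k" "r \<in> Mf k"
  then have "r \<in> fclosure Mf {\<xi> z | \<xi>. \<xi> \<in> S}"
    using dense Mf_antimono by blast
  with assms(1) lie_a show "\<exists>h\<in>H. h z - z - r \<in> Mf (Suc k)"
    using \<open>r \<in> Mf k\<close> by (rule orbit_approx_of_lie_a)
qed (fact assms)+

lemma Mf_subset_fclosure_values:
  assumes "(\<lambda>x. 0) \<in> S" "\<And>\<phi> \<psi>. \<phi> \<in> S \<Longrightarrow> \<psi> \<in> S \<Longrightarrow> (\<lambda>x. \<phi> x + \<psi> x) \<in> S"
    and lie_b: "\<And>g. g \<in> H \<Longrightarrow>
      \<exists>\<xi>\<in>S. ord Mf (g z - z) < \<infinity> \<longrightarrow> ord Mf (g z - z) < ord Mf (g z - z - \<xi> z)"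
    and dense: "{z + m | m. m \<in> Mf n} \<subseteq> fclosure Mf {g z | g. g \<in> H}"
  shows "Mf n \<subseteq> fclosure Mf {\<xi> z | \<xi>. \<xi> \<in> S}"
proof (rule subset_fclosure_of_additive_approx)
  show "0 \<in> {\<xi> z | \<xi>. \<xi> \<in> S}"
    using assms(1) by force
  show "x + y \<in> {\<xi> z | \<xi>. \<xi> \<in> S}"
    if "x \<in> {\<xi> z | \<xi>. \<xi> \<in> S}" "y \<in> {\<xi> z | \<xi>. \<xi> \<in> S}" for x y
    using that assms(2) by force
  fix k s
  assume "n \<le> k" "s \<in> Mf k"
  then have "z + s \<in> fclosure Mf {g z | g. g \<in> H}"
    using dense Mf_antimono by blast
  with assms(1) lie_b have "\<exists>\<xi>\<in>S. s - \<xi> z \<in> Mf (Suc k)"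
    using \<open>s \<in> Mf k\<close> by (rule value_approx_of_lie_b)
  then show "\<exists>x\<in>{\<xi> z | \<xi>. \<xi> \<in> S}. s - x \<in> Mf (Suc k)"
    by blast
qed

end

theorem theorem4p1:
  fixes sc :: "'k::comm_ring_1 \<Rightarrow> 'm::ab_group_add \<Rightarrow> 'm"
    and Mf :: "nat \<Rightarrow> 'm set"
    and G1 T :: "('m \<Rightarrow> 'm) set"
    and i :: nat
  assumes "module sc"
    and "filtration sc Mf"
    and "is_subgroup_fun G1 (GL_i sc Mf 1)"
    and "is_submodule_End sc T (End_i sc Mf 1)"
    and "i \<ge> 1"
    and lie_a: "\<forall>\<xi>\<in>T \<inter> End_i sc Mf i. \<forall>z. \<exists>g\<in>G1 \<inter> GL_i sc Mf i.
                 ord Mf (\<xi> z) < \<infinity> \<longrightarrow> ord Mf (g z - z - \<xi> z) > ord Mf (\<xi> z)"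
    and lie_b: "\<forall>g\<in>G1 \<inter> GL_i sc Mf i. \<forall>z. \<exists>\<xi>\<in>T \<inter> End_i sc Mf i.
                 ord Mf (g z - z) < \<infinity> \<longrightarrow> ord Mf (g z - z - \<xi> z) > ord Mf (g z - z)"
  shows "\<forall>z. \<forall>N::nat.
           Mf (N + 1) \<subseteq> fclosure Mf {\<xi> z | \<xi>. \<xi> \<in> T \<inter> End_i sc Mf i}
           \<longleftrightarrow> {z + m | m. m \<in> Mf (N + 1)} \<subseteq> fclosure Mf {g z | g. g \<in> G1 \<inter> GL_i sc Mf i}"
proof (intro allI iffI)
  interpret filtered_module sc Mf
    using assms(1,2) by (simp add: filtered_module_def filtered_module_axioms_def)
  have G: "id \<in> G1 \<inter> GL_i sc Mf i"
    "\<And>g h. g \<in> G1 \<inter> GL_i sc Mf i \<Longrightarrow> h \<in> G1 \<inter> GL_i sc Mf i \<Longrightarrow> g \<circ> h \<in> G1 \<inter> GL_i sc Mf i"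
    using assms(3) id_mem_GL_i comp_mem_GL_i unfolding is_subgroup_fun_def by auto
  have T: "(\<lambda>x. 0) \<in> T \<inter> End_i sc Mf i"
    "\<And>\<phi> \<psi>. \<phi> \<in> T \<inter> End_i sc Mf i \<Longrightarrow> \<psi> \<in> T \<inter> End_i sc Mf i \<Longrightarrow>
      (\<lambda>x. \<phi> x + \<psi> x) \<in> T \<inter> End_i sc Mf i"
    using assms(4) zero_mem_End_i add_mem_End_i unfolding is_submodule_End_def by auto
  fix z N
  show "{z + m | m. m \<in> Mf (N + 1)} \<subseteq> fclosure Mf {g z | g. g \<in> G1 \<inter> GL_i sc Mf i}"
    if "Mf (N + 1) \<subseteq> fclosure Mf {\<xi> z | \<xi>. \<xi> \<in> T \<inter> End_i sc Mf i}"
  proof (rule coset_subset_fclosure_orbit[OF G Int_lower2 \<open>i \<ge> 1\<close> _ that])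
    show "\<exists>g\<in>G1 \<inter> GL_i sc Mf i. ord Mf (\<xi> z) < \<infinity> \<longrightarrow> ord Mf (\<xi> z) < ord Mf (g z - z - \<xi> z)"
      if "\<xi> \<in> T \<inter> End_i sc Mf i" for \<xi>
      using lie_a that by blast
  qed
  show "Mf (N + 1) \<subseteq> fclosure Mf {\<xi> z | \<xi>. \<xi> \<in> T \<inter> End_i sc Mf i}"
    if "{z + m | m. m \<in> Mf (N + 1)} \<subseteq> fclosure Mf {g z | g. g \<in> G1 \<inter> GL_i sc Mf i}"
  proof (rule Mf_subset_fclosure_values[OF T _ that])
    show "\<exists>\<xi>\<in>T \<inter> End_i sc Mf i. ord Mf (g z - z) < \<infinity> \<longrightarrow> ord Mf (g z - z) < ord Mf (g z - z - \<xi> z)"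
      if "g \<in> G1 \<inter> GL_i sc Mf i" for g
      using lie_b that by blast
  qed
qed

end
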